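(* Let $\rho_1\geq0$, $\rho_2>1$, and let $\{V_m\}_{m\in\mathbb{Z}}$ be a $(\rho_1,\rho_2)$-regular MRA of $L^2(\mathbb{R}^d)$ with scaling function $\phi\in\mathcal{S}^{\rho_1}_{\rho_2}(\mathbb{R}^d)$. Then the reproducing kernel $q_0(x,y)=\sum_{k\in\mathbb{Z}^d}\phi(x-k)\overline{\phi(y-k)}$ of $V_0$ satisfies: there exist constants $c>0$ and $h>0$ such that $$|\partial_x^\alpha\partial_y^\beta q_0(x,y)|\lesssim h^{|\alpha+\beta|}\alpha!^{\rho_1}\beta!^{\rho_1}e^{-c|x-y|^{1/\rho_2}},\qquad \alpha,\beta\in\mathbb{N}^d,\ x,y\in\mathbb{R}^d,$$ with implicit constant independent of $\alpha,\beta,x,y$.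
   Context: For $\rho_1,\rho_2\geq 0$, $\mathcal{S}^{\rho_1}_{\rho_2}(\mathbb{R}^d)$ is the set of $\varphi\in\mathcal{S}(\mathbb{R}^d)$ for which there is $h>0$ with $\sup_{x,\alpha,\beta}\frac{h^{|\alpha+\beta|}}{\alpha!^{\rho_2}\beta!^{\rho_1}}|x^\alpha\partial^\beta\varphi(x)|<\infty$. A multiresolution approximation (MRA) is an increasing sequence $\{V_m\}_{m\in\mathbb{Z}}$ of closed subspaces of $L^2(\mathbb{R}^d)$ such that $\bigcap_m V_m=\{0\}$, $\bigcup_m V_m$ is dense, $f(x)\in V_m\iff f(2x)\in V_{m+1}$, $V_0$ is invariant under integer translations, and there is a scaling function $\phi$ with $\{\phi(x-n)\}_{n\in\mathbb{Z}^d}$ an orthonormal basis of $V_0$. It is $(\rho_1,\rho_2)$-regular if it has a scaling function $\phi\in\mathcal{S}^{\rho_1}_{\rho_2}(\mathbb{R}^d)$. *)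

theory Defs
  imports "HOL-Analysis.Analysis"
begin

text \<open>Euclidean space R^d is rendered as real^'n for a finite index type 'n (d = CARD('n)).
 Multi-indices are functions 'n => nat. Functions are complex valued.\<close>

definition coord_list :: "'n::finite list" where
  "coord_list = (SOME xs. distinct xs \<and> set xs = UNIV)"

definition pdiff :: "'n::finite \<Rightarrow> (real^'n \<Rightarrow> complex) \<Rightarrow> real^'n \<Rightarrow> complex" where
  "pdiff i f x = vector_derivative (\<lambda>t. f (x + t *\<^sub>R axis i 1)) (at 0)"

definition Dmulti :: "('n::finite \<Rightarrow> nat) \<Rightarrow> (real^'n \<Rightarrow> complex) \<Rightarrow> real^'n \<Rightarrow> complex" where
  "Dmulti \<alpha> f = foldr (\<lambda>i g. (pdiff i ^^ \<alpha> i) g) coord_list f"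

definition mi_abs :: "('n::finite \<Rightarrow> nat) \<Rightarrow> nat" where
  "mi_abs \<alpha> = (\<Sum>i\<in>UNIV. \<alpha> i)"

definition mi_fact :: "('n::finite \<Rightarrow> nat) \<Rightarrow> real" where
  "mi_fact \<alpha> = (\<Prod>i\<in>UNIV. fact (\<alpha> i))"

definition mi_pow :: "real^'n::finite \<Rightarrow> ('n \<Rightarrow> nat) \<Rightarrow> real" where
  "mi_pow x \<alpha> = (\<Prod>i\<in>UNIV. (x $ i) ^ \<alpha> i)"

definition smooth_fun :: "(real^'n::finite \<Rightarrow> complex) \<Rightarrow> bool" where
  "smooth_fun f \<longleftrightarrow> (\<forall>\<beta> x. Dmulti \<beta> f differentiable (at x))"

definition schwartz :: "(real^'n::finite \<Rightarrow> complex) set" where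
  "schwartz = {f. smooth_fun f \<and>
      (\<forall>\<alpha> \<beta>. \<exists>B. \<forall>x. \<bar>mi_pow x \<alpha>\<bar> * cmod (Dmulti \<beta> f x) \<le> B)}"

definition GS :: "real \<Rightarrow> real \<Rightarrow> (real^'n::finite \<Rightarrow> complex) set" where
  "GS \<rho>1 \<rho>2 = {f. f \<in> schwartz \<and> (\<exists>h>0. \<exists>B. \<forall>x \<alpha> \<beta>.
      h ^ (mi_abs \<alpha> + mi_abs \<beta>) / (mi_fact \<alpha> powr \<rho>2 * mi_fact \<beta> powr \<rho>1)
        * (\<bar>mi_pow x \<alpha>\<bar> * cmod (Dmulti \<beta> f x)) \<le> B)}"

text \<open>L^2(R^d): measurable square-integrable functions (elements of L^2 are identified up to
 a.e. equality; subspaces below are required to be closed under a.e. modification).\<close>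
definition L2 :: "(real^'n::finite \<Rightarrow> complex) set" where
  "L2 = {f. f \<in> borel_measurable lborel \<and> integrable lborel (\<lambda>x. (cmod (f x))\<^sup>2)}"

definition L2_inner :: "(real^'n::finite \<Rightarrow> complex) \<Rightarrow> (real^'n \<Rightarrow> complex) \<Rightarrow> complex" where
  "L2_inner f g = integral\<^sup>L lborel (\<lambda>x. f x * cnj (g x))"

definition L2_norm :: "(real^'n::finite \<Rightarrow> complex) \<Rightarrow> real" where
  "L2_norm f = sqrt (integral\<^sup>L lborel (\<lambda>x. (cmod (f x))\<^sup>2))"

definition closed_L2_subspace :: "(real^'n::finite \<Rightarrow> complex) set \<Rightarrow> bool" where
  "closed_L2_subspace V \<longleftrightarrow> V \<subseteq> L2 \<and> (\<lambda>x. 0) \<in> V \<and>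
     (\<forall>f\<in>V. \<forall>g\<in>V. (\<lambda>x. f x + g x) \<in> V) \<and>
     (\<forall>f\<in>V. \<forall>c::complex. (\<lambda>x. c * f x) \<in> V) \<and>
     (\<forall>f\<in>V. \<forall>g\<in>L2. (AE x in lborel. f x = g x) \<longrightarrow> g \<in> V) \<and>
     (\<forall>F f. (\<forall>k. F k \<in> V) \<longrightarrow> f \<in> L2 \<longrightarrow>
        (\<lambda>k. L2_norm (\<lambda>x. F k x - f x)) \<longlonglongrightarrow> 0 \<longrightarrow> f \<in> V)"

definition integer_points :: "(real^'n::finite) set" where
  "integer_points = {k. \<forall>i. k $ i \<in> \<int>}"

definition is_scaling_function ::
  "(int \<Rightarrow> (real^'n::finite \<Rightarrow> complex) set) \<Rightarrow> (real^'n \<Rightarrow> complex) \<Rightarrow> bool" where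
  "is_scaling_function V \<phi> \<longleftrightarrow>
     (\<forall>n\<in>integer_points. (\<lambda>x. \<phi> (x - n)) \<in> V 0) \<and>
     (\<forall>n\<in>integer_points. \<forall>k\<in>integer_points.
        L2_inner (\<lambda>x. \<phi> (x - n)) (\<lambda>x. \<phi> (x - k)) = (if n = k then 1 else 0)) \<and>
     (\<forall>f\<in>V 0. \<forall>\<epsilon>>0. \<exists>K c. finite K \<and> K \<subseteq> integer_points \<and>
        L2_norm (\<lambda>x. f x - (\<Sum>k\<in>K. c k * \<phi> (x - k))) < \<epsilon>)"

definition is_MRA :: "(int \<Rightarrow> (real^'n::finite \<Rightarrow> complex) set) \<Rightarrow> bool" where
  "is_MRA V \<longleftrightarrow>
     (\<forall>m. closed_L2_subspace (V m)) \<and>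
     (\<forall>m. V m \<subseteq> V (m + 1)) \<and>
     (\<forall>f. (\<forall>m. f \<in> V m) \<longrightarrow> (AE x in lborel. f x = 0)) \<and>
     (\<forall>f\<in>L2. \<forall>\<epsilon>>0. \<exists>m. \<exists>g\<in>V m. L2_norm (\<lambda>x. f x - g x) < \<epsilon>) \<and>
     (\<forall>m f. f \<in> V m \<longleftrightarrow> (\<lambda>x. f ((2::real) *\<^sub>R x)) \<in> V (m + 1)) \<and>
     (\<forall>f\<in>V 0. \<forall>k\<in>integer_points. (\<lambda>x. f (x - k)) \<in> V 0) \<and>
     (\<exists>\<phi>. is_scaling_function V \<phi>)"

definition regular_MRA_with ::
  "real \<Rightarrow> real \<Rightarrow> (int \<Rightarrow> (real^'n::finite \<Rightarrow> complex) set) \<Rightarrow> (real^'n \<Rightarrow> complex) \<Rightarrow> bool" where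
  "regular_MRA_with \<rho>1 \<rho>2 V \<phi> \<longleftrightarrow> is_MRA V \<and> is_scaling_function V \<phi> \<and> \<phi> \<in> GS \<rho>1 \<rho>2"

definition kernel0 :: "(real^'n::finite \<Rightarrow> complex) \<Rightarrow> real^'n \<Rightarrow> real^'n \<Rightarrow> complex" where
  "kernel0 \<phi> x y = infsum (\<lambda>k. \<phi> (x - k) * cnj (\<phi> (y - k))) integer_points"

end

theory Submission
  imports Defs "HOL-Real_Asymp.Real_Asymp"
begin

text \<open>Put \<open>s = 1/\<rho>2 \<le> 1\<close>. The Gelfand--Shilov bounds give every derivative of \<open>\<phi>\<close> a
  stretched exponential decay \<open>|D\<^sup>\<gamma> \<phi> z| \<le> A\<^sub>\<gamma> exp (-c |z|^s)\<close>, with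
  \<open>A\<^sub>\<gamma> = B \<gamma>!^\<rho>1 / h^|\<gamma>|\<close>. Lattice sums of such functions are bounded uniformly in the base
  point, so the series defining the kernel may be differentiated termwise, and
  \<open>D\<^sub>x\<^sup>\<alpha> D\<^sub>y\<^sup>\<beta> q\<^sub>0(x,y) = \<Sum>\<^sub>k D\<^sup>\<alpha>\<phi>(x-k) cnj (D\<^sup>\<beta>\<phi>(y-k))\<close>. Since
  \<open>|x-y|^s \<le> |x-k|^s + |y-k|^s\<close>, half of the decay of the two factors pays for
  \<open>exp (-c/2 |x-y|^s)\<close> and the other half keeps the lattice sum bounded.\<close>

section \<open>Lattice sums of stretched exponentials\<close>

lemma sum_le_suminf_of_injective_lower_bound:
  fixes g :: "real \<Rightarrow> real" and p :: "'a \<Rightarrow> nat" and r :: "'a \<Rightarrow> real"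
  assumes "finite G" "inj_on p G" "\<And>j. j \<in> G \<Longrightarrow> real (p j) \<le> r j"
    and "\<And>x. 0 \<le> g x" "\<And>x y. 0 \<le> x \<Longrightarrow> x \<le> y \<Longrightarrow> g y \<le> g x"
    and "summable (\<lambda>n. g (real n))"
  shows "(\<Sum>j\<in>G. g (r j)) \<le> (\<Sum>n. g (real n))"
proof -
  have "(\<Sum>j\<in>G. g (r j)) \<le> (\<Sum>j\<in>G. g (real (p j)))"
    using assms(3,5) by (intro sum_mono) auto
  also have "\<dots> = (\<Sum>n\<in>p ` G. g (real n))"
    using assms(2) by (simp add: sum.reindex)
  also have "\<dots> \<le> (\<Sum>n. g (real n))"
    using assms by (intro sum_le_suminf) auto
  finally show ?thesis .
qed

text \<open>Integers on either side of \<open>t\<close> are matched injectively with naturals not exceeding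
  their distance to \<open>t\<close>.\<close>
lemma sum_Ints_le_twice_suminf:
  fixes g :: "real \<Rightarrow> real" and t :: real and F :: "int set"
  assumes F: "finite F"
    and g: "\<And>x. 0 \<le> g x" "\<And>x y. 0 \<le> x \<Longrightarrow> x \<le> y \<Longrightarrow> g y \<le> g x"
    and summable: "summable (\<lambda>n. g (real n))"
  shows "(\<Sum>j\<in>F. g \<bar>t - of_int j\<bar>) \<le> 2 * (\<Sum>n. g (real n))"
proof -
  define F1 where "F1 = {j \<in> F. t \<le> of_int j}"
  define F2 where "F2 = {j \<in> F. of_int j < t}"
  have "(\<Sum>j\<in>F1. g \<bar>t - of_int j\<bar>) \<le> (\<Sum>n. g (real n))"
  proof (rule sum_le_suminf_of_injective_lower_bound[where p = "\<lambda>j. nat (j - \<lceil>t\<rceil>)"])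
    have "\<lceil>t\<rceil> \<le> j" if "j \<in> F1" for j
      using that by (simp add: F1_def ceiling_le_iff)
    then show "inj_on (\<lambda>j. nat (j - \<lceil>t\<rceil>)) F1"
      by (intro inj_onI) (simp add: eq_nat_nat_iff)
    show "real (nat (j - \<lceil>t\<rceil>)) \<le> \<bar>t - of_int j\<bar>" if "j \<in> F1" for j
      using that ceiling_correct[of t] by (simp add: F1_def ceiling_le_iff)
  qed (use F g summable in \<open>auto simp: F1_def\<close>)
  moreover have "(\<Sum>j\<in>F2. g \<bar>t - of_int j\<bar>) \<le> (\<Sum>n. g (real n))"
  proof (rule sum_le_suminf_of_injective_lower_bound[where p = "\<lambda>j. nat (\<lceil>t\<rceil> - 1 - j)"])
    have "j < \<lceil>t\<rceil>" if "j \<in> F2" for j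
      using that by (simp add: F2_def less_ceiling_iff)
    then show "inj_on (\<lambda>j. nat (\<lceil>t\<rceil> - 1 - j)) F2"
      by (intro inj_onI) (simp add: eq_nat_nat_iff)
    show "real (nat (\<lceil>t\<rceil> - 1 - j)) \<le> \<bar>t - of_int j\<bar>" if "j \<in> F2" for j
      using that ceiling_correct[of t] by (simp add: F2_def less_ceiling_iff)
  qed (use F g summable in \<open>auto simp: F2_def\<close>)
  moreover have "(\<Sum>j\<in>F. g \<bar>t - of_int j\<bar>) = (\<Sum>j\<in>F1. g \<bar>t - of_int j\<bar>) + (\<Sum>j\<in>F2. g \<bar>t - of_int j\<bar>)"
    using F by (subst sum.union_disjoint[symmetric]) (auto simp: F1_def F2_def intro: sum.cong)
  ultimately show ?thesis by linarith
qed

lemma exp_norm_powr_le_prod: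
  fixes v :: "real^'n" and a s :: real
  assumes a: "a \<ge> 0" and s: "s > 0"
  shows "exp (- a * norm v powr s) \<le> (\<Prod>i\<in>UNIV. exp (- (a / CARD('n)) * \<bar>v $ i\<bar> powr s))"
proof -
  have "(\<Sum>i\<in>UNIV. \<bar>v $ i\<bar> powr s) \<le> CARD('n) * norm v powr s"
    by (intro sum_bounded_above powr_mono2) (use s component_le_norm_cart in auto)
  then have "(a / CARD('n)) * (\<Sum>i\<in>UNIV. \<bar>v $ i\<bar> powr s) \<le> (a / CARD('n)) * (CARD('n) * norm v powr s)"
    using a by (intro mult_left_mono) auto
  then have "(\<Sum>i\<in>UNIV. (a / CARD('n)) * \<bar>v $ i\<bar> powr s) \<le> a * norm v powr s"
    by (simp add: sum_distrib_left)
  then show ?thesis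
    by (simp add: exp_sum[symmetric] sum_negf)
qed

lemma summable_exp_neg_powr:
  fixes a s :: real
  assumes "a > 0" "s > 0"
  shows "summable (\<lambda>n::nat. exp (- a * real n powr s))"
proof (rule summable_comparison_test_bigo)
  show "summable (\<lambda>n. norm (1 / real n ^ 2))"
    using inverse_power_summable[of 2, where 'a = real] by (simp add: divide_inverse)
  show "(\<lambda>n. exp (- a * real n powr s)) \<in> O(\<lambda>n. 1 / real n ^ 2)"
    using assms by real_asymp
qed

lemma lattice_exp_finite_sum_le:
  fixes a s :: real and x :: "real^'n"
  assumes a: "a > 0" and s: "s > 0" and F: "finite F" "F \<subseteq> integer_points"
  shows "(\<Sum>k\<in>F. exp (- a * norm (x - k) powr s))
    \<le> (2 * (\<Sum>n. exp (- (a / CARD('n)) * real n powr s))) ^ CARD('n)"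
proof -
  define g where "g r = exp (- (a / CARD('n)) * r powr s)" for r
  have g_antimono: "g y \<le> g x" if "0 \<le> x" "x \<le> y" for x y
    using that a s unfolding g_def by (auto intro!: divide_right_mono mult_left_mono powr_mono2)
  have g_summable: "summable (\<lambda>n. g (real n))"
    unfolding g_def using a s by (intro summable_exp_neg_powr) auto
  define B where "B i = (\<lambda>k. \<lfloor>k $ i\<rfloor>) ` F" for i
  have floor_eq: "of_int \<lfloor>k $ i\<rfloor> = k $ i" if "k \<in> F" for k i
    using that F(2) unfolding integer_points_def by (auto elim!: Ints_cases)
  have "(\<Sum>k\<in>F. exp (- a * norm (x - k) powr s)) \<le> (\<Sum>k\<in>F. \<Prod>i\<in>UNIV. g \<bar>x $ i - k $ i\<bar>)"
  proof (rule sum_mono)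
    fix k
    show "exp (- a * norm (x - k) powr s) \<le> (\<Prod>i\<in>UNIV. g \<bar>x $ i - k $ i\<bar>)"
      using exp_norm_powr_le_prod[of a s "x - k"] a s by (simp add: g_def)
  qed
  also have "\<dots> = (\<Sum>p\<in>(\<lambda>k i. \<lfloor>k $ i\<rfloor>) ` F. \<Prod>i\<in>UNIV. g \<bar>x $ i - of_int (p i)\<bar>)"
  proof (subst sum.reindex)
    show "inj_on (\<lambda>k i. \<lfloor>k $ i\<rfloor>) F"
      by (intro inj_onI) (metis floor_eq vec_eq_iff)
  qed (auto simp: floor_eq intro!: sum.cong)
  also have "\<dots> \<le> (\<Sum>p\<in>PiE UNIV B. \<Prod>i\<in>UNIV. g \<bar>x $ i - of_int (p i)\<bar>)"
    using F(1) by (intro sum_mono2) (auto simp: B_def finite_PiE prod_nonneg g_def)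
  also have "\<dots> = (\<Prod>i\<in>UNIV. \<Sum>j\<in>B i. g \<bar>x $ i - of_int j\<bar>)"
    using F(1) by (subst prod_sum_PiE) (auto simp: B_def)
  also have "\<dots> \<le> (\<Prod>i\<in>(UNIV::'n set). 2 * (\<Sum>n. g (real n)))"
    using F(1) g_antimono g_summable
    by (intro prod_mono conjI sum_nonneg sum_Ints_le_twice_suminf) (auto simp: B_def g_def)
  finally show ?thesis by (simp add: g_def)
qed

lemma lattice_exp_sum_bounded:
  fixes a s :: real
  assumes a: "a > 0" and s: "s > 0"
  obtains C where
    "\<And>x::real^'n. (\<lambda>k. exp (- a * norm (x - k) powr s)) summable_on integer_points"
    "\<And>x::real^'n. (\<Sum>\<^sub>\<infinity>k\<in>integer_points. exp (- a * norm (x - k) powr s)) \<le> C"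
proof
  note finite_le = lattice_exp_finite_sum_le[OF a s]
  show summable: "(\<lambda>k. exp (- a * norm (x - k) powr s)) summable_on integer_points" for x :: "real^'n"
    using finite_le by (intro nonneg_bdd_above_summable_on bdd_aboveI2) auto
  show "(\<Sum>\<^sub>\<infinity>k\<in>integer_points. exp (- a * norm (x - k) powr s))
      \<le> (2 * (\<Sum>n. exp (- (a / CARD('n)) * real n powr s))) ^ CARD('n)" for x :: "real^'n"
    using finite_le by (intro infsum_le_finite_sums summable) auto
qed

section \<open>Decay of Gelfand--Shilov functions\<close>

lemma power_powr: "((x::real) ^ n) powr r = (x powr r) ^ n"
  by (induction n) (auto simp: powr_mult)

text \<open>With \<open>a = u powr (1/\<rho>)\<close> the hypothesis says \<open>a^N / N! \<le> (K/f) powr (1/\<rho>)\<close> for all \<open>N\<close>;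
  summing these bounds against \<open>2^-N\<close> gives \<open>exp (a/2) \<le> 2 (K/f) powr (1/\<rho>)\<close>.\<close>
lemma exp_decay_of_factorial_bounds:
  fixes \<rho> f u K :: real
  assumes \<rho>: "\<rho> > 0" and f: "f \<ge> 0" and u: "u \<ge> 0"
    and H: "\<And>N. u ^ N * f \<le> K * fact N powr \<rho>"
  shows "f \<le> K * 2 powr \<rho> * exp (- (\<rho> / 2) * u powr (1 / \<rho>))"
proof (cases "f = 0")
  case True
  then show ?thesis using H[of 0] by simp
next
  case False
  then have f: "f > 0" using f by simp
  have K: "K > 0" using H[of 0] f by (simp add: zero_less_mult_iff)
  define a where "a = u powr (1 / \<rho>)"
  define Q where "Q = (K / f) powr (1 / \<rho>)"
  have a: "a \<ge> 0" unfolding a_def by simp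
  have a_powr: "a powr \<rho> = u" unfolding a_def using \<rho> u by (simp add: powr_powr)
  have term_le: "a ^ N / fact N \<le> Q" for N
  proof -
    have "(a ^ N / fact N) powr \<rho> = (a powr \<rho>) ^ N / fact N powr \<rho>"
      using a by (simp add: powr_divide power_powr)
    also have "\<dots> \<le> K / f"
      using H[of N] f unfolding a_powr by (simp add: field_simps)
    finally have "((a ^ N / fact N) powr \<rho>) powr (1 / \<rho>) \<le> Q"
      unfolding Q_def using \<rho> by (intro powr_mono2) auto
    also have "((a ^ N / fact N) powr \<rho>) powr (1 / \<rho>) = a ^ N / fact N"
      using \<rho> a by (simp add: powr_powr)
    finally show ?thesis .
  qed
  have exp_sums: "(\<lambda>N. y ^ N / fact N) sums exp y" for y :: real
    using exp_converges[of y] by (simp add: divide_inverse mult.commute)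
  have "exp (a / 2) \<le> Q * 2"
  proof (rule sums_le[OF _ exp_sums])
    show "(\<lambda>N. Q * (1 / 2) ^ N) sums (Q * 2)"
      using geometric_sums[of "1 / 2 :: real"] by (intro sums_mult) simp
    show "(a / 2) ^ N / fact N \<le> Q * (1 / 2) ^ N" for N
      using mult_right_mono[OF term_le[of N], of "(1 / 2) ^ N"] by (simp add: power_divide mult.commute)
  qed
  then have "exp (a / 2) powr \<rho> \<le> (Q * 2) powr \<rho>"
    using \<rho> by (intro powr_mono2) auto
  also have "\<dots> = (K * 2 powr \<rho>) / f"
    unfolding Q_def using \<rho> K f by (simp add: powr_mult powr_powr)
  also have "exp (a / 2) powr \<rho> = exp (\<rho> / 2 * a)"
    by (simp add: exp_powr_real)
  finally have "f * exp (\<rho> / 2 * a) \<le> K * 2 powr \<rho>"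
    by (subst (asm) pos_le_divide_eq[OF f]) (simp only: mult.commute)
  then have "f \<le> K * 2 powr \<rho> / exp (\<rho> / 2 * a)"
    by (subst pos_le_divide_eq) auto
  then show ?thesis
    unfolding a_def by (simp only: exp_minus divide_inverse mult_minus_left)
qed

lemma
  fixes i :: "'n::finite"
  shows mi_abs_single: "mi_abs (\<lambda>j. if j = i then N else 0) = N"
    and mi_fact_single: "mi_fact (\<lambda>j. if j = i then N else 0) = fact N"
    and mi_pow_single: "mi_pow z (\<lambda>j. if j = i then N else 0) = (z $ i) ^ N"
proof -
  show "mi_abs (\<lambda>j. if j = i then N else 0) = N" unfolding mi_abs_def by simp
  have "(\<Prod>j\<in>UNIV. fact (if j = i then N else 0) :: real) = (\<Prod>j\<in>UNIV. if j = i then fact N else 1)"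
    by (rule prod.cong) auto
  then show "mi_fact (\<lambda>j. if j = i then N else 0) = fact N" unfolding mi_fact_def by simp
  have "(\<Prod>j\<in>UNIV. (z $ j) ^ (if j = i then N else 0)) = (\<Prod>j\<in>UNIV. if j = i then (z $ i) ^ N else 1)"
    by (rule prod.cong) auto
  then show "mi_pow z (\<lambda>j. if j = i then N else 0) = (z $ i) ^ N" unfolding mi_pow_def by simp
qed

lemma mi_fact_pos: "mi_fact \<beta> > 0"
  unfolding mi_fact_def by (intro prod_pos) auto

lemma norm_le_card_mult_abs_component:
  fixes z :: "real^'n::finite"
  obtains i where "norm z \<le> CARD('n) * \<bar>z $ i\<bar>"
proof -
  obtain i where i: "\<And>j. \<bar>z $ j\<bar> \<le> \<bar>z $ i\<bar>"
  proof -
    define M where "M = Max (range (\<lambda>j. \<bar>z $ j\<bar>))"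
    have "M \<in> range (\<lambda>j. \<bar>z $ j\<bar>)" unfolding M_def by (intro Max_in) auto
    then obtain i where "M = \<bar>z $ i\<bar>" by auto
    moreover have "\<bar>z $ j\<bar> \<le> M" for j unfolding M_def by (intro Max_ge) auto
    ultimately show ?thesis using that by metis
  qed
  have "norm z \<le> (\<Sum>j\<in>UNIV. \<bar>z $ j\<bar>)" by (rule norm_le_l1_cart)
  also have "\<dots> \<le> CARD('n) * \<bar>z $ i\<bar>" by (intro sum_bounded_above i)
  finally show ?thesis by (rule that)
qed

lemma GS_coordinate_moment_bound:
  fixes \<phi> :: "real^'n::finite \<Rightarrow> complex"
  assumes "\<phi> \<in> GS \<rho>1 \<rho>2"
  obtains h B where "h > 0" "B \<ge> 0" "\<And>\<beta> z i N. (h * \<bar>z $ i\<bar>) ^ N * cmod (Dmulti \<beta> \<phi> z)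
      \<le> B * (mi_fact \<beta> powr \<rho>1 / h ^ mi_abs \<beta>) * fact N powr \<rho>2"
proof -
  obtain h B where h: "h > 0" and GS_bound: "\<And>x \<alpha> \<beta>.
      h ^ (mi_abs \<alpha> + mi_abs \<beta>) / (mi_fact \<alpha> powr \<rho>2 * mi_fact \<beta> powr \<rho>1)
        * (\<bar>mi_pow x \<alpha>\<bar> * cmod (Dmulti \<beta> \<phi> x)) \<le> B"
    using assms unfolding GS_def by blast
  have "B \<ge> 0"
    using GS_bound[where x = 0 and \<alpha> = "\<lambda>_. 0" and \<beta> = "\<lambda>_. 0"] h
    by (simp add: mi_abs_def mi_fact_def mi_pow_def) (meson norm_ge_zero order_trans)
  moreover have "(h * \<bar>z $ i\<bar>) ^ N * cmod (Dmulti \<beta> \<phi> z)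
      \<le> B * (mi_fact \<beta> powr \<rho>1 / h ^ mi_abs \<beta>) * fact N powr \<rho>2" for \<beta> z i N
  proof -
    have "h ^ (N + mi_abs \<beta>) / (fact N powr \<rho>2 * mi_fact \<beta> powr \<rho>1)
        * (\<bar>z $ i\<bar> ^ N * cmod (Dmulti \<beta> \<phi> z)) \<le> B"
      using GS_bound[where x = z and \<alpha> = "\<lambda>j. if j = i then N else 0" and \<beta> = \<beta>]
      by (simp add: mi_abs_single mi_fact_single mi_pow_single power_abs)
    then have "(h ^ N * h ^ mi_abs \<beta>) / (fact N powr \<rho>2 * mi_fact \<beta> powr \<rho>1)
        * (\<bar>z $ i\<bar> ^ N * cmod (Dmulti \<beta> \<phi> z)) \<le> B"
      by (simp add: power_add)
    moreover have "0 < fact N powr \<rho>2" "0 < mi_fact \<beta> powr \<rho>1" "0 < h ^ mi_abs \<beta>"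
      using h mi_fact_pos[of \<beta>] by auto
    ultimately show ?thesis
      unfolding power_mult_distrib by (simp add: field_simps)
  qed
  ultimately show ?thesis using h that by blast
qed

text \<open>Optimise the moment bound over \<open>N\<close> for a coordinate \<open>i\<close> of largest modulus.\<close>
lemma GS_Dmulti_decay:
  fixes \<phi> :: "real^'n::finite \<Rightarrow> complex"
  assumes \<rho>2: "\<rho>2 > 0" and \<phi>: "\<phi> \<in> GS \<rho>1 \<rho>2"
  obtains c h B where "c > 0" "h > 0" "B \<ge> 0"
    "\<And>\<beta> z. cmod (Dmulti \<beta> \<phi> z)
       \<le> B * (mi_fact \<beta> powr \<rho>1 / h ^ mi_abs \<beta>) * exp (- c * norm z powr (1 / \<rho>2))"
proof -
  obtain h B where h: "h > 0" and B: "B \<ge> 0" and moment: "\<And>\<beta> z i N.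
      (h * \<bar>z $ i\<bar>) ^ N * cmod (Dmulti \<beta> \<phi> z) \<le> B * (mi_fact \<beta> powr \<rho>1 / h ^ mi_abs \<beta>) * fact N powr \<rho>2"
    using GS_coordinate_moment_bound[OF \<phi>] by blast
  define d where "d = real CARD('n)"
  have d: "d > 0" unfolding d_def by simp
  define c where "c = (\<rho>2 / 2) * (h / d) powr (1 / \<rho>2)"
  have "cmod (Dmulti \<beta> \<phi> z)
      \<le> (B * 2 powr \<rho>2) * (mi_fact \<beta> powr \<rho>1 / h ^ mi_abs \<beta>) * exp (- c * norm z powr (1 / \<rho>2))"
    for \<beta> z
  proof -
    define K where "K = B * (mi_fact \<beta> powr \<rho>1 / h ^ mi_abs \<beta>)"
    have K: "K \<ge> 0" unfolding K_def using B h by simp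
    obtain i where i: "norm z \<le> d * \<bar>z $ i\<bar>"
      unfolding d_def by (rule norm_le_card_mult_abs_component)
    have decay_i: "cmod (Dmulti \<beta> \<phi> z) \<le> K * 2 powr \<rho>2 * exp (- (\<rho>2 / 2) * (h * \<bar>z $ i\<bar>) powr (1 / \<rho>2))"
      using h moment unfolding K_def by (intro exp_decay_of_factorial_bounds \<rho>2) auto
    have "(h / d) * norm z \<le> h * \<bar>z $ i\<bar>"
      using i h d by (simp add: field_simps)
    then have "(\<rho>2 / 2) * ((h / d) * norm z) powr (1 / \<rho>2) \<le> (\<rho>2 / 2) * (h * \<bar>z $ i\<bar>) powr (1 / \<rho>2)"
      using h d \<rho>2 by (intro mult_left_mono powr_mono2) auto
    then have "c * norm z powr (1 / \<rho>2) \<le> (\<rho>2 / 2) * (h * \<bar>z $ i\<bar>) powr (1 / \<rho>2)"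
      unfolding c_def by (simp only: powr_mult mult.assoc)
    then have "K * 2 powr \<rho>2 * exp (- (\<rho>2 / 2) * (h * \<bar>z $ i\<bar>) powr (1 / \<rho>2))
        \<le> K * 2 powr \<rho>2 * exp (- c * norm z powr (1 / \<rho>2))"
      using K by (intro mult_left_mono) auto
    then show ?thesis using decay_i unfolding K_def by (simp add: mult_ac)
  qed
  moreover have "c > 0" unfolding c_def using \<rho>2 h d by simp
  ultimately show ?thesis using that[of c h "B * 2 powr \<rho>2"] h B by simp
qed

section \<open>Termwise differentiation of infinite sums\<close>

lemma has_sum_diff:
  fixes f g :: "'a \<Rightarrow> 'b::topological_ab_group_add"
  assumes "(f has_sum a) A" "(g has_sum b) A"
  shows "((\<lambda>x. f x - g x) has_sum (a - b)) A"
proof -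
  have "((\<lambda>x. - g x) has_sum - b) A" using assms(2) by (simp add: has_sum_uminus)
  with has_sum_add[OF assms(1) this] show ?thesis by simp
qed

lemma tendsto_infsum_zero_dominated:
  fixes r :: "'k \<Rightarrow> 'a \<Rightarrow> real"
  assumes N: "N summable_on A"
    and lim: "\<And>k. k \<in> A \<Longrightarrow> ((\<lambda>t. r k t) \<longlongrightarrow> 0) F"
    and bound: "\<forall>\<^sub>F t in F. \<forall>k\<in>A. 0 \<le> r k t \<and> r k t \<le> N k"
  shows "((\<lambda>t. \<Sum>\<^sub>\<infinity>k\<in>A. r k t) \<longlongrightarrow> 0) F"
proof (rule tendstoI)
  fix e :: real
  assume e: "e > 0"
  obtain X where X: "finite X" "X \<subseteq> A" "dist (sum N X) (infsum N A) \<le> e / 3"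
    using has_sum_finite_approximation[OF has_sum_infsum[OF N], of "e / 3"] e by auto
  have N_tail: "N summable_on (A - X)"
    using summable_on_Diff[OF N _ X(2)] X(1) by auto
  have "infsum N (A - X) = infsum N A - sum N X"
    using infsum_Diff[OF N _ X(2)] X(1) by simp
  then have N_tail_le: "infsum N (A - X) \<le> e / 3"
    using X(3) unfolding dist_real_def abs_le_iff by linarith
  define e' where "e' = e / (3 * (real (card X) + 1))"
  have e': "e' > 0" "real (card X) * e' < e / 3"
    unfolding e'_def using e by (auto simp: field_simps)
  have "\<forall>\<^sub>F t in F. \<forall>k\<in>X. r k t < e'"
  proof (rule eventually_ball_finite[OF X(1)], rule ballI)
    fix k assume "k \<in> X"
    then have "((\<lambda>t. r k t) \<longlongrightarrow> 0) F" using lim X(2) by auto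
    from tendstoD[OF this e'(1)] show "\<forall>\<^sub>F t in F. r k t < e'"
      by eventually_elim (simp add: dist_real_def)
  qed
  then show "\<forall>\<^sub>F t in F. dist (\<Sum>\<^sub>\<infinity>k\<in>A. r k t) 0 < e"
    using bound
  proof eventually_elim
    case (elim t)
    have summable: "(\<lambda>k. r k t) summable_on A"
      using elim(2) by (intro summable_on_comparison_test[OF N]) auto
    have "(\<Sum>\<^sub>\<infinity>k\<in>A. r k t) = sum (\<lambda>k. r k t) X + (\<Sum>\<^sub>\<infinity>k\<in>A - X. r k t)"
      using infsum_Diff[OF summable _ X(2)] X(1) by simp
    also have "sum (\<lambda>k. r k t) X \<le> sum (\<lambda>_. e') X"
      using elim(1) by (intro sum_mono) auto
    also have "(\<Sum>\<^sub>\<infinity>k\<in>A - X. r k t) \<le> infsum N (A - X)"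
      using elim(2) summable_on_Diff[OF summable _ X(2)] X(1) N_tail
      by (intro infsum_mono) auto
    finally have "(\<Sum>\<^sub>\<infinity>k\<in>A. r k t) \<le> real (card X) * e' + infsum N (A - X)"
      by simp
    then have "(\<Sum>\<^sub>\<infinity>k\<in>A. r k t) < e"
      using e e'(2) N_tail_le by linarith
    moreover have "0 \<le> (\<Sum>\<^sub>\<infinity>k\<in>A. r k t)"
      using elim(2) by (intro infsum_nonneg) auto
    ultimately show ?case by (simp add: dist_real_def)
  qed
qed

lemma norm_linearization_remainder_le:
  fixes g g' :: "real \<Rightarrow> 'b::real_normed_vector"
  assumes der: "\<And>t. \<bar>t\<bar> < 1 \<Longrightarrow> (g has_vector_derivative g' t) (at t)"
    and bound: "\<And>t. \<bar>t\<bar> < 1 \<Longrightarrow> norm (g' t) \<le> M"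
    and h: "\<bar>h\<bar> < 1"
  shows "norm (g h - g 0 - h *\<^sub>R g' 0) \<le> 2 * M * \<bar>h\<bar>"
proof -
  have "norm (g h - g 0 - (h - 0) *\<^sub>R g' 0) \<le> norm (h - 0) * (2 * M)"
  proof (rule vector_differentiable_bound_linearization[where S = "{-1<..<1}"])
    show "(g has_vector_derivative g' t) (at t within {-1<..<1})" if "t \<in> {-1<..<1}" for t
      using der[of t] that by (auto intro: has_vector_derivative_at_within)
    show "closed_segment 0 h \<subseteq> {-1<..<1}"
      using h by (auto simp: closed_segment_eq_real_ivl)
    show "norm (g' t - g' 0) \<le> 2 * M" if "t \<in> {-1<..<1}" for t
    proof -
      have "norm (g' t - g' 0) \<le> norm (g' t) + norm (g' 0)"
        by (rule norm_triangle_ineq4)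
      also have "\<dots> \<le> M + M"
        using bound[of t] bound[of 0] that by (intro add_mono) auto
      finally show ?thesis by simp
    qed
  qed simp_all
  then show ?thesis by (simp add: mult.commute)
qed

lemma infsum_linearization_remainder:
  fixes g g' :: "'k \<Rightarrow> real \<Rightarrow> 'b::real_normed_vector" and M :: "'k \<Rightarrow> real"
  assumes der: "\<And>k t. k \<in> A \<Longrightarrow> \<bar>t\<bar> < 1 \<Longrightarrow> (g k has_vector_derivative g' k t) (at t)"
    and bound: "\<And>k t. k \<in> A \<Longrightarrow> \<bar>t\<bar> < 1 \<Longrightarrow> norm (g' k t) \<le> M k"
    and M: "M summable_on A"
  defines "r k h \<equiv> norm (g k h - g k 0 - h *\<^sub>R g' k 0) / norm h"
  shows "\<And>h. \<bar>h\<bar> < 1 \<Longrightarrow> (\<lambda>k. r k h) summable_on A"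
    and "((\<lambda>h. \<Sum>\<^sub>\<infinity>k\<in>A. r k h) \<longlongrightarrow> 0) (at 0)"
proof -
  have M2: "(\<lambda>k. 2 * M k) summable_on A"
    using M by (rule summable_on_cmult_right)
  have r_bound: "0 \<le> r k h \<and> r k h \<le> 2 * M k" if k: "k \<in> A" and h: "\<bar>h\<bar> < 1" for k h
  proof -
    have "norm (g k h - g k 0 - h *\<^sub>R g' k 0) \<le> 2 * M k * \<bar>h\<bar>"
      using der[OF k] bound[OF k] h by (rule norm_linearization_remainder_le)
    moreover have "0 \<le> M k"
      using order_trans[OF norm_ge_zero bound[OF k, of 0]] by simp
    ultimately show ?thesis
      unfolding r_def by (cases "h = 0") (simp_all add: pos_divide_le_eq)
  qed
  show "(\<lambda>k. r k h) summable_on A" if "\<bar>h\<bar> < 1" for h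
    by (rule summable_on_comparison_test[OF M2]) (use r_bound that in auto)
  show "((\<lambda>h. \<Sum>\<^sub>\<infinity>k\<in>A. r k h) \<longlongrightarrow> 0) (at 0)"
  proof (rule tendsto_infsum_zero_dominated[OF M2])
    show "((\<lambda>h. r k h) \<longlongrightarrow> 0) (at 0)" if "k \<in> A" for k
      using der[OF that, of 0] unfolding has_vector_derivative_def has_derivative_at r_def by auto
    have "\<forall>\<^sub>F h in at (0::real). \<bar>h\<bar> < 1"
      unfolding eventually_at by (rule exI[of _ 1]) auto
    then show "\<forall>\<^sub>F h in at 0. \<forall>k\<in>A. 0 \<le> r k h \<and> r k h \<le> 2 * M k"
      by eventually_elim (use r_bound in auto)
  qed
qed

lemma has_vector_derivative_infsum:
  fixes g g' :: "'k \<Rightarrow> real \<Rightarrow> 'b::banach" and M :: "'k \<Rightarrow> real"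
  assumes der: "\<And>k t. k \<in> A \<Longrightarrow> \<bar>t\<bar> < 1 \<Longrightarrow> (g k has_vector_derivative g' k t) (at t)"
    and bound: "\<And>k t. k \<in> A \<Longrightarrow> \<bar>t\<bar> < 1 \<Longrightarrow> norm (g' k t) \<le> M k"
    and M: "M summable_on A"
    and summable: "\<And>t. \<bar>t\<bar> < 1 \<Longrightarrow> (\<lambda>k. g k t) summable_on A"
  shows "((\<lambda>t. \<Sum>\<^sub>\<infinity>k\<in>A. g k t) has_vector_derivative (\<Sum>\<^sub>\<infinity>k\<in>A. g' k 0)) (at 0)"
proof -
  define S where "S t = (\<Sum>\<^sub>\<infinity>k\<in>A. g k t)" for t
  define L where "L = (\<Sum>\<^sub>\<infinity>k\<in>A. g' k 0)"
  define r where "r k h = norm (g k h - g k 0 - h *\<^sub>R g' k 0) / norm h" for k h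
  have r_summable: "\<And>h. \<bar>h\<bar> < 1 \<Longrightarrow> (\<lambda>k. r k h) summable_on A"
    and r_lim: "((\<lambda>h. \<Sum>\<^sub>\<infinity>k\<in>A. r k h) \<longlongrightarrow> 0) (at 0)"
    unfolding r_def by (rule infsum_linearization_remainder[OF der bound M]; assumption)+
  have g'_summable: "(\<lambda>k. g' k 0) summable_on A"
  proof (rule abs_summable_summable)
    show "(\<lambda>k. g' k 0) abs_summable_on A"
      by (rule summable_on_comparison_test[OF M]) (use bound[of _ 0] in auto)
  qed
  have "\<forall>\<^sub>F h in at (0::real). h \<noteq> 0 \<and> \<bar>h\<bar> < 1"
    unfolding eventually_at by (rule exI[of _ 1]) auto
  then have quotient_le: "\<forall>\<^sub>F h in at 0. norm (S (0 + h) - S 0 - h *\<^sub>R L) / norm h \<le> (\<Sum>\<^sub>\<infinity>k\<in>A. r k h)"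
  proof eventually_elim
    case (elim h)
    define v where "v k = (g k h - g k 0 - h *\<^sub>R g' k 0) /\<^sub>R norm h" for k
    have "((\<lambda>k. g k h - g k 0 - h *\<^sub>R g' k 0) has_sum (S h - S 0 - h *\<^sub>R L)) A"
      unfolding S_def L_def using elim summable g'_summable
      by (intro has_sum_diff has_sum_scaleR[of "\<lambda>k. g' k 0"] has_sum_infsum) auto
    then have "(v has_sum ((S h - S 0 - h *\<^sub>R L) /\<^sub>R norm h)) A"
      unfolding v_def by (rule has_sum_scaleR)
    moreover have "norm (v k) = r k h" for k
      unfolding v_def r_def by (simp add: divide_inverse_commute)
    then have "((\<lambda>k. norm (v k)) has_sum (\<Sum>\<^sub>\<infinity>k\<in>A. r k h)) A"
      using r_summable elim by simp
    ultimately have "norm ((S h - S 0 - h *\<^sub>R L) /\<^sub>R norm h) \<le> (\<Sum>\<^sub>\<infinity>k\<in>A. r k h)"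
      by (rule norm_has_sum_bound[rotated])
    then show ?case by (simp add: divide_inverse_commute)
  qed
  have "((\<lambda>h. norm (S (0 + h) - S 0 - h *\<^sub>R L) / norm h) \<longlongrightarrow> 0) (at 0)"
    by (rule tendsto_sandwich[OF _ quotient_le tendsto_const r_lim]) simp
  then show ?thesis
    unfolding has_vector_derivative_def has_derivative_at S_def L_def
    using bounded_linear_scaleR_left by blast
qed

section \<open>Iterated partial derivatives\<close>

definition Dmulti_along ::
  "'n::finite list \<Rightarrow> ('n \<Rightarrow> nat) \<Rightarrow> (real^'n \<Rightarrow> complex) \<Rightarrow> real^'n \<Rightarrow> complex" where
  "Dmulti_along xs \<gamma> f = foldr (\<lambda>i g. (pdiff i ^^ \<gamma> i) g) xs f"

lemma Dmulti_along_Nil [simp]: "Dmulti_along [] \<gamma> f = f"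
  by (simp add: Dmulti_along_def)

lemma Dmulti_along_Cons [simp]:
  "Dmulti_along (i # xs) \<gamma> f = (pdiff i ^^ \<gamma> i) (Dmulti_along xs \<gamma> f)"
  by (simp add: Dmulti_along_def)

lemma Dmulti_along_cong:
  "(\<And>i. i \<in> set xs \<Longrightarrow> \<gamma> i = \<gamma>' i) \<Longrightarrow> Dmulti_along xs \<gamma> f = Dmulti_along xs \<gamma>' f"
  by (induction xs) auto

lemma Dmulti_along_zero: "(\<And>i. i \<in> set xs \<Longrightarrow> \<gamma> i = 0) \<Longrightarrow> Dmulti_along xs \<gamma> f = f"
  by (induction xs) auto

lemma Dmulti_eq_Dmulti_along: "Dmulti \<gamma> f = Dmulti_along coord_list \<gamma> f"
  by (simp add: Dmulti_def Dmulti_along_def)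

lemma Dmulti_zero [simp]: "Dmulti (\<lambda>_. 0) f = f"
  by (simp add: Dmulti_eq_Dmulti_along Dmulti_along_zero)

lemma distinct_coord_list: "distinct (coord_list :: 'n::finite list)"
proof -
  have "\<exists>xs::'n list. distinct xs \<and> set xs = UNIV"
    using finite_distinct_list[of "UNIV :: 'n set"] by auto
  then have "distinct (coord_list :: 'n list) \<and> set (coord_list :: 'n list) = UNIV"
    unfolding coord_list_def by (rule someI_ex)
  then show ?thesis ..
qed

lemma Dmulti_along_suffix:
  assumes "coord_list = ys @ xs"
  shows "Dmulti_along xs \<gamma> f = Dmulti (\<lambda>i. if i \<in> set xs then \<gamma> i else 0) f"
proof -
  let ?\<gamma> = "\<lambda>i. if i \<in> set xs then \<gamma> i else 0"
  have "set ys \<inter> set xs = {}" using distinct_coord_list assms by (metis distinct_append)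
  have "Dmulti ?\<gamma> f = Dmulti_along ys ?\<gamma> (Dmulti_along xs ?\<gamma> f)"
    by (simp add: Dmulti_eq_Dmulti_along assms Dmulti_along_def)
  also have "\<dots> = Dmulti_along xs ?\<gamma> f"
    using \<open>set ys \<inter> set xs = {}\<close> by (intro Dmulti_along_zero) auto
  also have "\<dots> = Dmulti_along xs \<gamma> f"
    by (rule Dmulti_along_cong) auto
  finally show ?thesis by simp
qed

text \<open>Partial derivatives are not known to commute, so \<open>T\<close> is only required to commute with
  those \<open>\<partial>\<^sub>i\<close> that map a derivative of \<open>\<psi>\<close> to another one; peeling the coordinates off
  \<open>coord_list\<close> one at a time only ever uses these.\<close>
lemma Dmulti_commute:
  assumes T: "\<And>\<gamma> \<gamma>' i. pdiff i (Dmulti \<gamma> \<psi>) = Dmulti \<gamma>' \<psi> \<Longrightarrow>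
      pdiff i (T (Dmulti \<gamma> \<psi>)) = T (Dmulti \<gamma>' \<psi>)"
  shows "Dmulti \<gamma> (T \<psi>) = T (Dmulti \<gamma> \<psi>)"
proof -
  have "Dmulti_along xs \<gamma> (T \<psi>) = T (Dmulti_along xs \<gamma> \<psi>)" if "coord_list = ys @ xs" for xs ys \<gamma>
    using that
  proof (induction xs arbitrary: ys \<gamma>)
    case Nil
    then show ?case by simp
  next
    case (Cons i xs)
    have i_notin: "i \<notin> set xs"
      using distinct_coord_list Cons.prems by (metis distinct.simps(2) distinct_append)
    have pow_eq: "(pdiff i ^^ k) (Dmulti_along xs \<gamma> \<psi>)
        = Dmulti (\<lambda>l. if l \<in> set (i # xs) then (\<gamma>(i := k)) l else 0) \<psi>" for k
    proof -
      have "Dmulti_along xs (\<gamma>(i := k)) \<psi> = Dmulti_along xs \<gamma> \<psi>"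
        using i_notin by (intro Dmulti_along_cong) auto
      then have "(pdiff i ^^ k) (Dmulti_along xs \<gamma> \<psi>) = Dmulti_along (i # xs) (\<gamma>(i := k)) \<psi>"
        by simp
      also have "\<dots> = Dmulti (\<lambda>l. if l \<in> set (i # xs) then (\<gamma>(i := k)) l else 0) \<psi>"
        using Cons.prems by (intro Dmulti_along_suffix) simp
      finally show ?thesis .
    qed
    have "(pdiff i ^^ k) (T (Dmulti_along xs \<gamma> \<psi>)) = T ((pdiff i ^^ k) (Dmulti_along xs \<gamma> \<psi>))" for k
    proof (induction k)
      case 0
      then show ?case by simp
    next
      case (Suc k)
      have "pdiff i ((pdiff i ^^ k) (Dmulti_along xs \<gamma> \<psi>)) = (pdiff i ^^ Suc k) (Dmulti_along xs \<gamma> \<psi>)"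
        by simp
      then have "pdiff i (T ((pdiff i ^^ k) (Dmulti_along xs \<gamma> \<psi>))) = T ((pdiff i ^^ Suc k) (Dmulti_along xs \<gamma> \<psi>))"
        unfolding pow_eq by (rule T)
      then show ?case using Suc by simp
    qed
    moreover have "Dmulti_along xs \<gamma> (T \<psi>) = T (Dmulti_along xs \<gamma> \<psi>)"
      using Cons.IH[of "ys @ [i]"] Cons.prems by simp
    ultimately show ?case by simp
  qed
  from this[of "[]"] show ?thesis by (simp add: Dmulti_eq_Dmulti_along)
qed

lemma has_vector_derivative_along_line:
  fixes \<psi> :: "real^'n::finite \<Rightarrow> complex"
  assumes "\<psi> differentiable (at (a + t *\<^sub>R v))"
  shows "((\<lambda>s. \<psi> (a + s *\<^sub>R v)) has_vector_derivative frechet_derivative \<psi> (at (a + t *\<^sub>R v)) v) (at t)"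
proof -
  define D where "D = frechet_derivative \<psi> (at (a + t *\<^sub>R v))"
  have D: "(\<psi> has_derivative D) (at (a + t *\<^sub>R v))"
    using assms frechet_derivative_works unfolding D_def by blast
  have "((\<lambda>s. a + s *\<^sub>R v) has_derivative (\<lambda>h. h *\<^sub>R v)) (at t)"
    by (auto intro!: derivative_eq_intros)
  from has_derivative_compose[OF this D]
  have "((\<lambda>s. \<psi> (a + s *\<^sub>R v)) has_derivative (\<lambda>h. D (h *\<^sub>R v))) (at t)" .
  moreover have "D (h *\<^sub>R v) = h *\<^sub>R D v" for h
    using has_derivative_linear[OF D] by (simp add: linear_scale)
  ultimately show ?thesis unfolding has_vector_derivative_def D_def by simp
qed

lemma has_vector_derivative_pdiff:
  fixes \<psi> :: "real^'n::finite \<Rightarrow> complex"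
  assumes "\<And>z. \<psi> differentiable (at z)"
  shows "((\<lambda>t. \<psi> (y + t *\<^sub>R axis i 1)) has_vector_derivative pdiff i \<psi> (y + t *\<^sub>R axis i 1)) (at t)"
proof -
  have "pdiff i \<psi> p = frechet_derivative \<psi> (at p) (axis i 1)" for p
    unfolding pdiff_def using has_vector_derivative_along_line[of \<psi> p 0 "axis i 1"] assms
    by (intro vector_derivative_at) simp
  then show ?thesis using has_vector_derivative_along_line[of \<psi> y t "axis i 1"] assms by simp
qed

lemma pdiff_cnj:
  fixes \<psi> :: "real^'n::finite \<Rightarrow> complex"
  assumes "\<And>z. \<psi> differentiable (at z)"
  shows "pdiff i (\<lambda>z. cnj (\<psi> z)) = (\<lambda>z. cnj (pdiff i \<psi> z))"
proof
  fix y
  have "((\<lambda>t. cnj (\<psi> (y + t *\<^sub>R axis i 1))) has_vector_derivative cnj (pdiff i \<psi> (y + 0 *\<^sub>R axis i 1))) (at 0)"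
    by (intro has_vector_derivative_cnj has_vector_derivative_pdiff assms)
  then show "pdiff i (\<lambda>z. cnj (\<psi> z)) y = cnj (pdiff i \<psi> y)"
    unfolding pdiff_def by (intro vector_derivative_at) simp
qed

lemma Dmulti_cnj:
  fixes \<phi> :: "real^'n::finite \<Rightarrow> complex"
  assumes "\<And>\<gamma> z. Dmulti \<gamma> \<phi> differentiable (at z)"
  shows "Dmulti \<gamma> (\<lambda>z. cnj (\<phi> z)) = (\<lambda>z. cnj (Dmulti \<gamma> \<phi> z))"
  using Dmulti_commute[where T = "\<lambda>\<psi> z. cnj (\<psi> z)" and \<psi> = \<phi>] pdiff_cnj assms by metis

section \<open>Termwise differentiation of lattice sums\<close>

lemma powr_add_le_add_powr:
  fixes a b s :: real
  assumes "0 \<le> a" "0 \<le> b" "0 < s" "s \<le> 1"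
  shows "(a + b) powr s \<le> a powr s + b powr s"
proof (cases "a + b = 0")
  case True
  then show ?thesis using assms by simp
next
  case False
  define t where "t = a + b"
  have t: "t > 0" using False assms unfolding t_def by simp
  have le_powr: "x \<le> x powr s" if "0 \<le> x" "x \<le> 1" for x
    using that assms by (metis powr_mono' powr_one)
  have "1 = a / t + b / t" using t by (simp add: t_def add_divide_distrib[symmetric])
  also have "\<dots> \<le> (a / t) powr s + (b / t) powr s"
    using assms t by (intro add_mono le_powr) (auto simp: t_def)
  also have "\<dots> = (a powr s + b powr s) / t powr s"
    using assms t by (simp add: powr_divide add_divide_distrib)
  finally show ?thesis using t by (simp add: t_def le_divide_eq)
qed

lemma norm_add_powr_le:
  fixes x y :: "'a::real_normed_vector"
  assumes "0 < s" "s \<le> 1"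
  shows "norm (x + y) powr s \<le> norm x powr s + norm y powr s"
proof -
  have "norm (x + y) powr s \<le> (norm x + norm y) powr s"
    using assms by (intro powr_mono2 norm_triangle_ineq) auto
  also have "\<dots> \<le> norm x powr s + norm y powr s"
    using assms by (intro powr_add_le_add_powr) auto
  finally show ?thesis .
qed

lemma exp_neg_norm_powr_shift_le:
  fixes w v :: "'a::real_normed_vector"
  assumes a: "a \<ge> 0" and s: "0 < s" "s \<le> 1" and v: "norm v \<le> 1"
  shows "exp (- a * norm (w + v) powr s) \<le> exp a * exp (- a * norm w powr s)"
proof -
  have "norm w powr s \<le> norm (w + v) powr s + norm (- v) powr s"
    using norm_add_powr_le[OF s, of "w + v" "- v"] by simp
  also have "norm (- v) powr s \<le> 1"
    using v s by (simp add: powr_le1)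
  finally have "a * norm w powr s \<le> a * (norm (w + v) powr s + 1)"
    using a by (simp add: mult_left_mono)
  then have "- a * norm (w + v) powr s \<le> a + - a * norm w powr s"
    by (simp add: algebra_simps)
  then show ?thesis by (simp flip: exp_add)
qed

lemma decay_bound_nonneg:
  fixes f :: "'a::real_normed_vector \<Rightarrow> 'b::real_normed_vector"
  assumes "\<And>z. norm (f z) \<le> A * exp (- a * norm z powr s)"
  shows "A \<ge> 0"
  using order_trans[OF norm_ge_zero assms[of 0]] by (simp add: zero_le_mult_iff)

lemma pdiff_lattice_sum:
  fixes \<psi> c :: "real^'n::finite \<Rightarrow> complex"
  assumes diff: "\<And>z. \<psi> differentiable (at z)"
    and bound0: "\<And>z. norm (\<psi> z) \<le> A0 * exp (- a * norm z powr s)"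
    and bound1: "\<And>z. norm (pdiff i \<psi> z) \<le> A1 * exp (- a * norm z powr s)"
    and c: "\<And>k. norm (c k) \<le> Cc"
    and a: "a > 0" and s: "0 < s" "s \<le> 1"
  shows "pdiff i (\<lambda>z. \<Sum>\<^sub>\<infinity>k\<in>integer_points. c k * \<psi> (z - k))
       = (\<lambda>z. \<Sum>\<^sub>\<infinity>k\<in>integer_points. c k * pdiff i \<psi> (z - k))"
proof
  fix y :: "real^'n"
  obtain C where summable: "\<And>x::real^'n. (\<lambda>k. exp (- a * norm (x - k) powr s)) summable_on integer_points"
    using lattice_exp_sum_bounded[OF a s(1)] by blast
  have Cc: "Cc \<ge> 0" using c[of 0] norm_ge_zero order_trans by blast
  have A1: "A1 \<ge> 0" using bound1 by (rule decay_bound_nonneg)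
  define e :: "real^'n" where "e = axis i 1"
  define g where "g k t = c k * \<psi> ((y - k) + t *\<^sub>R e)" for k t
  define g' where "g' k t = c k * pdiff i \<psi> ((y - k) + t *\<^sub>R e)" for k t
  have "((\<lambda>t. \<Sum>\<^sub>\<infinity>k\<in>integer_points. g k t) has_vector_derivative (\<Sum>\<^sub>\<infinity>k\<in>integer_points. g' k 0)) (at 0)"
  proof (rule has_vector_derivative_infsum)
    show "(g k has_vector_derivative g' k t) (at t)" for k t
      unfolding g_def g'_def e_def
      by (intro has_vector_derivative_mult_right has_vector_derivative_pdiff diff)
    show "norm (g' k t) \<le> Cc * A1 * exp a * exp (- a * norm (y - k) powr s)" if "\<bar>t\<bar> < 1" for k t
    proof -
      have "norm (g' k t) \<le> Cc * (A1 * exp (- a * norm ((y - k) + t *\<^sub>R e) powr s))"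
        unfolding g'_def norm_mult using c bound1 Cc by (intro mult_mono) auto
      also have "\<dots> \<le> Cc * (A1 * (exp a * exp (- a * norm (y - k) powr s)))"
        using Cc A1 a s that
        by (intro mult_left_mono exp_neg_norm_powr_shift_le) (auto simp: e_def)
      finally show ?thesis by (simp add: mult_ac)
    qed
    show "(\<lambda>k. Cc * A1 * exp a * exp (- a * norm (y - k) powr s)) summable_on integer_points"
      using summable[of y] by (rule summable_on_cmult_right)
    show "(\<lambda>k. g k t) summable_on integer_points" for t
    proof (rule abs_summable_summable, rule summable_on_comparison_test)
      show "(\<lambda>k. Cc * A0 * exp (- a * norm ((y + t *\<^sub>R e) - k) powr s)) summable_on integer_points"
        using summable[of "y + t *\<^sub>R e"] by (rule summable_on_cmult_right)
      show "norm (g k t) \<le> Cc * A0 * exp (- a * norm ((y + t *\<^sub>R e) - k) powr s)" for k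
      proof -
        have "norm (g k t) \<le> Cc * (A0 * exp (- a * norm ((y + t *\<^sub>R e) - k) powr s))"
          unfolding g_def norm_mult using c bound0[of "(y - k) + t *\<^sub>R e"] Cc
          by (intro mult_mono) (auto simp: algebra_simps)
        then show ?thesis by (simp add: mult_ac)
      qed
    qed simp
  qed
  then show "pdiff i (\<lambda>z. \<Sum>\<^sub>\<infinity>k\<in>integer_points. c k * \<psi> (z - k)) y
       = (\<Sum>\<^sub>\<infinity>k\<in>integer_points. c k * pdiff i \<psi> (y - k))"
    unfolding pdiff_def g_def g'_def e_def by (intro vector_derivative_at) (simp add: algebra_simps)
qed

lemma Dmulti_lattice_sum:
  fixes \<psi> c :: "real^'n::finite \<Rightarrow> complex"
  assumes diff: "\<And>\<gamma> z. Dmulti \<gamma> \<psi> differentiable (at z)"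
    and bound: "\<And>\<gamma> z. norm (Dmulti \<gamma> \<psi> z) \<le> A \<gamma> * exp (- a * norm z powr s)"
    and c: "\<And>k. norm (c k) \<le> Cc"
    and a: "a > 0" and s: "0 < s" "s \<le> 1"
  shows "Dmulti \<gamma> (\<lambda>z. \<Sum>\<^sub>\<infinity>k\<in>integer_points. c k * \<psi> (z - k))
       = (\<lambda>z. \<Sum>\<^sub>\<infinity>k\<in>integer_points. c k * Dmulti \<gamma> \<psi> (z - k))"
proof -
  define T where "T f z = (\<Sum>\<^sub>\<infinity>k\<in>integer_points. c k * f (z - k))" for f :: "real^'n \<Rightarrow> complex" and z
  have "Dmulti \<gamma> (T \<psi>) = T (Dmulti \<gamma> \<psi>)"
  proof (rule Dmulti_commute)
    fix \<gamma> \<gamma>' i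
    assume \<gamma>': "pdiff i (Dmulti \<gamma> \<psi>) = Dmulti \<gamma>' \<psi>"
    have "pdiff i (T (Dmulti \<gamma> \<psi>)) = T (pdiff i (Dmulti \<gamma> \<psi>))"
      unfolding T_def
    proof (rule pdiff_lattice_sum[OF diff bound _ c a s])
      show "norm (pdiff i (Dmulti \<gamma> \<psi>) z) \<le> A \<gamma>' * exp (- a * norm z powr s)" for z
        unfolding \<gamma>' by (rule bound)
    qed
    then show "pdiff i (T (Dmulti \<gamma> \<psi>)) = T (Dmulti \<gamma>' \<psi>)" unfolding \<gamma>' .
  qed
  then show ?thesis unfolding T_def .
qed

section \<open>The reproducing kernel\<close>

lemma Dmulti_kernel0:
  fixes \<phi> :: "real^'n::finite \<Rightarrow> complex"
  assumes diff: "\<And>\<gamma> z. Dmulti \<gamma> \<phi> differentiable (at z)"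
    and decay: "\<And>\<gamma> z. cmod (Dmulti \<gamma> \<phi> z) \<le> A \<gamma> * exp (- a * norm z powr s)"
    and a: "a > 0" and s: "0 < s" "s \<le> 1"
  shows "Dmulti \<alpha> (\<lambda>x'. Dmulti \<beta> (\<lambda>y'. kernel0 \<phi> x' y') y) x
       = (\<Sum>\<^sub>\<infinity>k\<in>integer_points. Dmulti \<alpha> \<phi> (x - k) * cnj (Dmulti \<beta> \<phi> (y - k)))"
proof -
  have sup_bound: "cmod (Dmulti \<gamma> \<phi> z) \<le> A \<gamma>" for \<gamma> z
  proof -
    have "A \<gamma> * exp (- a * norm z powr s) \<le> A \<gamma>"
      using decay_bound_nonneg[OF decay] a by (simp add: mult_left_le)
    then show ?thesis using decay[of \<gamma> z] by linarith
  qed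
  define \<phi>c where "\<phi>c z = cnj (\<phi> z)" for z
  have Dmulti_\<phi>c: "Dmulti \<gamma> \<phi>c = (\<lambda>z. cnj (Dmulti \<gamma> \<phi> z))" for \<gamma>
    unfolding \<phi>c_def by (rule Dmulti_cnj[OF diff])
  have inner: "Dmulti \<beta> (\<lambda>y'. kernel0 \<phi> x' y')
      = (\<lambda>y'. \<Sum>\<^sub>\<infinity>k\<in>integer_points. \<phi> (x' - k) * Dmulti \<beta> \<phi>c (y' - k))" for x'
    unfolding kernel0_def \<phi>c_def[symmetric]
  proof (rule Dmulti_lattice_sum[OF _ _ _ a s])
    show "Dmulti \<gamma> \<phi>c differentiable (at z)" for \<gamma> z
      unfolding Dmulti_\<phi>c using diff by (simp add: differentiable_cnj_iff)
    show "cmod (Dmulti \<gamma> \<phi>c z) \<le> A \<gamma> * exp (- a * norm z powr s)" for \<gamma> z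
      unfolding Dmulti_\<phi>c using decay by simp
    show "cmod (\<phi> (x' - k)) \<le> A (\<lambda>_. 0)" for k
      using sup_bound[of "\<lambda>_. 0"] by simp
  qed
  have "Dmulti \<alpha> (\<lambda>x'. Dmulti \<beta> (\<lambda>y'. kernel0 \<phi> x' y') y)
      = Dmulti \<alpha> (\<lambda>x'. \<Sum>\<^sub>\<infinity>k\<in>integer_points. cnj (Dmulti \<beta> \<phi> (y - k)) * \<phi> (x' - k))"
    unfolding inner Dmulti_\<phi>c by (simp add: mult.commute)
  also have "\<dots> = (\<lambda>x'. \<Sum>\<^sub>\<infinity>k\<in>integer_points. cnj (Dmulti \<beta> \<phi> (y - k)) * Dmulti \<alpha> \<phi> (x' - k))"
    using sup_bound by (intro Dmulti_lattice_sum[OF diff decay _ a s]) simp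
  finally show ?thesis by (simp add: mult.commute)
qed

lemma exp_neg_norm_powr_mult_le:
  fixes x y k :: "'a::real_normed_vector"
  assumes a: "a \<ge> 0" and s: "0 < s" "s \<le> 1"
  shows "exp (- a * norm (x - k) powr s) * exp (- a * norm (y - k) powr s)
    \<le> exp (- (a / 2) * norm (x - y) powr s) * exp (- (a / 2) * norm (x - k) powr s)"
proof -
  have "norm (x - y) powr s \<le> norm (x - k) powr s + norm (k - y) powr s"
    using norm_add_powr_le[OF s, of "x - k" "k - y"] by simp
  also have "norm (k - y) = norm (y - k)" by (rule norm_minus_commute)
  finally have "a * norm (x - y) powr s \<le> a * norm (x - k) powr s + a * norm (y - k) powr s"
    using a by (simp add: mult_left_mono flip: distrib_left)
  moreover have "0 \<le> a * norm (y - k) powr s" using a by simp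
  ultimately have "- a * norm (x - k) powr s + - a * norm (y - k) powr s
      \<le> - (a / 2) * norm (x - y) powr s + - (a / 2) * norm (x - k) powr s"
    by linarith
  then show ?thesis by (simp flip: exp_add)
qed

lemma lattice_sum_product_decay:
  fixes a s :: real
  assumes a: "a > 0" and s: "0 < s" "s \<le> 1"
  obtains C where "C \<ge> 0"
    "\<And>(f :: real^'n \<Rightarrow> complex) g A B x y.
       (\<And>z. cmod (f z) \<le> A * exp (- a * norm z powr s)) \<Longrightarrow>
       (\<And>z. cmod (g z) \<le> B * exp (- a * norm z powr s)) \<Longrightarrow>
       cmod (\<Sum>\<^sub>\<infinity>k\<in>integer_points. f (x - k) * g (y - k))
         \<le> C * A * B * exp (- (a / 2) * norm (x - y) powr s)"
proof -
  obtain C where summable: "\<And>x::real^'n. (\<lambda>k. exp (- (a / 2) * norm (x - k) powr s)) summable_on integer_points"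
    and C: "\<And>x::real^'n. (\<Sum>\<^sub>\<infinity>k\<in>integer_points. exp (- (a / 2) * norm (x - k) powr s)) \<le> C"
    using lattice_exp_sum_bounded[OF half_gt_zero[OF a] s(1)] by blast
  have "0 \<le> (\<Sum>\<^sub>\<infinity>k\<in>integer_points. exp (- (a / 2) * norm ((0 :: real^'n) - k) powr s))"
    by (intro infsum_nonneg) simp
  then have "C \<ge> 0" using C[of 0] by linarith
  moreover have "cmod (\<Sum>\<^sub>\<infinity>k\<in>integer_points. f (x - k) * g (y - k))
         \<le> C * A * B * exp (- (a / 2) * norm (x - y) powr s)"
    if f: "\<And>z. cmod (f z) \<le> A * exp (- a * norm z powr s)"
      and g: "\<And>z. cmod (g z) \<le> B * exp (- a * norm z powr s)"
    for f g :: "real^'n \<Rightarrow> complex" and A B and x y :: "real^'n"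
  proof -
    define E where "E = exp (- (a / 2) * norm (x - y) powr s)"
    define K where "K k = A * B * E * exp (- (a / 2) * norm (x - k) powr s)" for k
    have A: "A \<ge> 0" and B: "B \<ge> 0"
      using decay_bound_nonneg[OF f] decay_bound_nonneg[OF g] .
    have term_le: "cmod (f (x - k) * g (y - k)) \<le> K k" for k
    proof -
      have "cmod (f (x - k) * g (y - k))
          \<le> (A * exp (- a * norm (x - k) powr s)) * (B * exp (- a * norm (y - k) powr s))"
        unfolding norm_mult using f g A by (intro mult_mono) auto
      also have "\<dots> = A * B * (exp (- a * norm (x - k) powr s) * exp (- a * norm (y - k) powr s))"
        by (simp add: mult_ac)
      also have "\<dots> \<le> K k"
        unfolding K_def E_def mult.assoc[of "A * B"] using A B a s
        by (intro mult_left_mono exp_neg_norm_powr_mult_le) auto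
      finally show ?thesis .
    qed
    have K_summable: "K summable_on integer_points"
      unfolding K_def using summable[of x] by (rule summable_on_cmult_right)
    have norm_summable: "(\<lambda>k. cmod (f (x - k) * g (y - k))) summable_on integer_points"
      by (rule summable_on_comparison_test[OF K_summable]) (use term_le in auto)
    have "cmod (\<Sum>\<^sub>\<infinity>k\<in>integer_points. f (x - k) * g (y - k))
        \<le> (\<Sum>\<^sub>\<infinity>k\<in>integer_points. cmod (f (x - k) * g (y - k)))"
      using norm_summable by (rule norm_infsum_bound)
    also have "\<dots> \<le> (\<Sum>\<^sub>\<infinity>k\<in>integer_points. K k)"
      using norm_summable K_summable term_le by (rule infsum_mono)
    also have "\<dots> = A * B * E * (\<Sum>\<^sub>\<infinity>k\<in>integer_points. exp (- (a / 2) * norm (x - k) powr s))"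
      unfolding K_def using summable[of x] by (rule infsum_cmult_right)
    also have "\<dots> \<le> A * B * E * C"
      using A B C[of x] by (intro mult_left_mono) (auto simp: E_def)
    finally show ?thesis by (simp add: E_def mult_ac)
  qed
  ultimately show ?thesis using that by blast
qed

lemma Dmulti_kernel0_bound:
  fixes \<phi> :: "real^'n::finite \<Rightarrow> complex"
  assumes diff: "\<And>\<gamma> z. Dmulti \<gamma> \<phi> differentiable (at z)"
    and decay: "\<And>\<gamma> z. cmod (Dmulti \<gamma> \<phi> z) \<le> A \<gamma> * exp (- a * norm z powr s)"
    and a: "a > 0" and s: "0 < s" "s \<le> 1"
  obtains C where "C \<ge> 0" "\<And>\<alpha> \<beta> x y. cmod (Dmulti \<alpha> (\<lambda>x'. Dmulti \<beta> (\<lambda>y'. kernel0 \<phi> x' y') y) x)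
      \<le> C * A \<alpha> * A \<beta> * exp (- (a / 2) * norm (x - y) powr s)"
proof -
  obtain C where C: "C \<ge> 0" and product: "\<And>(f :: real^'n \<Rightarrow> complex) g A B x y.
       (\<And>z. cmod (f z) \<le> A * exp (- a * norm z powr s)) \<Longrightarrow>
       (\<And>z. cmod (g z) \<le> B * exp (- a * norm z powr s)) \<Longrightarrow>
       cmod (\<Sum>\<^sub>\<infinity>k\<in>integer_points. f (x - k) * g (y - k))
         \<le> C * A * B * exp (- (a / 2) * norm (x - y) powr s)"
    using lattice_sum_product_decay[OF a s] by blast
  have "cmod (Dmulti \<alpha> (\<lambda>x'. Dmulti \<beta> (\<lambda>y'. kernel0 \<phi> x' y') y) x)
      \<le> C * A \<alpha> * A \<beta> * exp (- (a / 2) * norm (x - y) powr s)" for \<alpha> \<beta> x y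
    unfolding Dmulti_kernel0[OF diff decay a s]
  proof (rule product[where f = "Dmulti \<alpha> \<phi>" and g = "\<lambda>z. cnj (Dmulti \<beta> \<phi> z)"])
    show "cmod (Dmulti \<alpha> \<phi> z) \<le> A \<alpha> * exp (- a * norm z powr s)" for z
      by (rule decay)
    show "cmod (cnj (Dmulti \<beta> \<phi> z)) \<le> A \<beta> * exp (- a * norm z powr s)" for z
      unfolding complex_mod_cnj by (rule decay)
  qed
  with C that show ?thesis by blast
qed

theorem lemma4p3:
  fixes \<rho>1 \<rho>2 :: real
    and V :: "int \<Rightarrow> (real^'n::finite \<Rightarrow> complex) set"
    and \<phi> :: "real^'n \<Rightarrow> complex"
  assumes "\<rho>1 \<ge> 0" and "\<rho>2 > 1"
    and "regular_MRA_with \<rho>1 \<rho>2 V \<phi>"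
  shows "\<exists>C>0. \<exists>c>0. \<exists>h>0. \<forall>\<alpha> \<beta> x y.
     cmod (Dmulti \<alpha> (\<lambda>x'. Dmulti \<beta> (\<lambda>y'. kernel0 \<phi> x' y') y) x)
       \<le> C * h ^ (mi_abs \<alpha> + mi_abs \<beta>) * mi_fact \<alpha> powr \<rho>1 * mi_fact \<beta> powr \<rho>1
           * exp (- c * norm (x - y) powr (1 / \<rho>2))"
proof -
  have GS: "\<phi> \<in> GS \<rho>1 \<rho>2" using assms(3) unfolding regular_MRA_with_def by blast
  then have diff: "\<And>\<gamma> z. Dmulti \<gamma> \<phi> differentiable (at z)"
    unfolding GS_def schwartz_def smooth_fun_def by blast
  have s: "0 < 1 / \<rho>2" "1 / \<rho>2 \<le> 1" using assms(2) by auto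
  obtain c h B where c: "c > 0" and h: "h > 0" and B: "B \<ge> 0" and decay: "\<And>\<gamma> z.
      cmod (Dmulti \<gamma> \<phi> z) \<le> B * (mi_fact \<gamma> powr \<rho>1 / h ^ mi_abs \<gamma>) * exp (- c * norm z powr (1 / \<rho>2))"
    using GS_Dmulti_decay[OF _ GS] assms(2) by auto
  obtain C where C: "C \<ge> 0" and bound: "\<And>\<alpha> \<beta> x y.
      cmod (Dmulti \<alpha> (\<lambda>x'. Dmulti \<beta> (\<lambda>y'. kernel0 \<phi> x' y') y) x)
        \<le> C * (B * (mi_fact \<alpha> powr \<rho>1 / h ^ mi_abs \<alpha>)) * (B * (mi_fact \<beta> powr \<rho>1 / h ^ mi_abs \<beta>))
          * exp (- (c / 2) * norm (x - y) powr (1 / \<rho>2))"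
    using Dmulti_kernel0_bound[OF diff decay c s] by blast
  have "C * (B * (mi_fact \<alpha> powr \<rho>1 / h ^ mi_abs \<alpha>)) * (B * (mi_fact \<beta> powr \<rho>1 / h ^ mi_abs \<beta>))
      \<le> (C * B * B + 1) * (1 / h) ^ (mi_abs \<alpha> + mi_abs \<beta>) * mi_fact \<alpha> powr \<rho>1 * mi_fact \<beta> powr \<rho>1"
    for \<alpha> \<beta> :: "'n \<Rightarrow> nat"
    using h by (auto simp: power_add power_one_over field_simps)
  then have "cmod (Dmulti \<alpha> (\<lambda>x'. Dmulti \<beta> (\<lambda>y'. kernel0 \<phi> x' y') y) x)
      \<le> (C * B * B + 1) * (1 / h) ^ (mi_abs \<alpha> + mi_abs \<beta>) * mi_fact \<alpha> powr \<rho>1 * mi_fact \<beta> powr \<rho>1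
           * exp (- (c / 2) * norm (x - y) powr (1 / \<rho>2))" for \<alpha> \<beta> x y
    using order_trans[OF bound mult_right_mono] by fastforce
  moreover have "C * B * B + 1 > 0" "c / 2 > 0" "1 / h > 0"
    using B C c h by (simp_all add: add_nonneg_pos)
  ultimately show ?thesis by blast
qed

end
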